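(* Let $1\le p\le n$, $\beta>0$, let $f:\mathbb{R}^{n\times p}\to\mathbb{R}$ be smooth, and let $X\in\mathbb{R}^{n\times p}_*$. Let $\mathrm{T}_X\mathrm{St}_{X^\top X}=\{\xi\in\mathbb{R}^{n\times p}\mid \xi^\top X+X^\top\xi=0\}$ be the tangent space at $X$ of $\mathrm{St}_{X^\top X}=\{Y\in\mathbb{R}^{n\times p}\mid Y^\top Y=X^\top X\}$. Let $\mathrm{grad}_\beta f(X)$ be the constrained Riemannian gradient, i.e., the unique $\mathrm{grad}_\beta f(X)\in\mathrm{T}_X\mathrm{St}_{X^\top X}$ such that $\mathrm{D}f(X)[\xi]=g^\beta_X(\xi,\mathrm{grad}_\beta f(X))$ for all $\xi\in\mathrm{T}_X\mathrm{St}_{X^\top X}$. Then $\mathrm{grad}_\beta f(X)=\mathrm{Proj}_{X,\beta}(\nabla_\beta f(X))$ and \[\mathrm{grad}_\beta f(X)=\nabla_{\mathrm E}f(X)X^\top X-\frac{1}{2\beta}X\nabla_{\mathrm E}f(X)^\top X+\Big(\frac{1}{2\beta}-1\Big)X(X^\top X)^{-1}X^\top\nabla_{\mathrm E}f(X)X^\top X.\] In particular, for $\beta=\tfrac12$, \[\mathrm{grad}_{1/2} f(X)=\nabla_{\mathrm E}f(X)X^\top X-X\nabla_{\mathrm E}f(X)^\top X=2\operatorname{skew}\big(\nabla_{\mathrm E}f(X)X^\top\big)X.\]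
   Context: $\mathbb{R}^{n\times p}_*$ denotes the set of full-rank (rank $p$) real $n\times p$ matrices, and $\operatorname{skew}(A)=(A-A^\top)/2$. For $\beta>0$ and $X\in\mathbb{R}^{n\times p}_*$, the $\beta$-metric is the inner product on $\mathbb{R}^{n\times p}$ given by \[g^\beta_X(\xi,\zeta)=\mathrm{trace}\Big(\xi^\top\big(\mathrm{I}_n-(1-\beta)X(X^\top X)^{-1}X^\top\big)\zeta\,(X^\top X)^{-1}\Big),\qquad \xi,\zeta\in\mathbb{R}^{n\times p}.\] $\mathrm{Proj}_{X,\beta}:\mathbb{R}^{n\times p}\to\mathrm{T}_X\mathrm{St}_{X^\top X}$ is the orthogonal projection with respect to $g^\beta_X$ (characterized by $g^\beta_X(\xi,Z-\mathrm{Proj}_{X,\beta}(Z))=0$ for all tangent $\xi$). $\nabla_\beta f(X)$ is the unique element of $\mathbb{R}^{n\times p}$ with $\mathrm{D}f(X)[\xi]=g^\beta_X(\xi,\nabla_\beta f(X))$ for all $\xi\in\mathbb{R}^{n\times p}$, and $\nabla_{\mathrm E}f(X)$ is the Euclidean gradient, with $\mathrm{D}f(X)[\xi]=\mathrm{trace}(\xi^\top\nabla_{\mathrm E}f(X))$. *)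

theory Defs
  imports "HOL-Analysis.Analysis"
begin

type_synonym ('n,'p) mat = "real^'p^'n"   (* n x p real matrix: 'n rows, 'p columns *)

fun Ck :: "nat \<Rightarrow> ('a::euclidean_space \<Rightarrow> real) \<Rightarrow> bool" where
  "Ck 0 f = continuous_on UNIV f"
| "Ck (Suc k) f = ((\<forall>Y. f differentiable (at Y)) \<and>
                     (\<forall>v. Ck k (\<lambda>Y. frechet_derivative f (at Y) v)))"

definition smooth :: "('a::euclidean_space \<Rightarrow> real) \<Rightarrow> bool" where
  "smooth f = (\<forall>k. Ck k f)"

definition full_rank :: "real^'p^'n \<Rightarrow> bool" where
  "full_rank X = (rank X = CARD('p))"

definition gbeta :: "real \<Rightarrow> real^'p^'n \<Rightarrow> real^'p^'n \<Rightarrow> real^'p^'n \<Rightarrow> real" where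
  "gbeta \<beta> X \<xi> \<zeta> =
     trace (transpose \<xi> **
            (mat 1 - (1 - \<beta>) *\<^sub>R (X ** matrix_inv (transpose X ** X) ** transpose X)) **
            \<zeta> ** matrix_inv (transpose X ** X))"

definition tangent_space :: "real^'p^'n \<Rightarrow> (real^'p^'n) set" where
  "tangent_space X = {\<xi>. transpose \<xi> ** X + transpose X ** \<xi> = 0}"

definition egrad :: "(real^'p^'n \<Rightarrow> real) \<Rightarrow> real^'p^'n \<Rightarrow> real^'p^'n" where
  "egrad f X = (THE G. \<forall>\<xi>. frechet_derivative f (at X) \<xi> = trace (transpose \<xi> ** G))"

definition nabla_beta :: "real \<Rightarrow> (real^'p^'n \<Rightarrow> real) \<Rightarrow> real^'p^'n \<Rightarrow> real^'p^'n" where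
  "nabla_beta \<beta> f X = (THE G. \<forall>\<xi>. frechet_derivative f (at X) \<xi> = gbeta \<beta> X \<xi> G)"

definition Proj :: "real \<Rightarrow> real^'p^'n \<Rightarrow> real^'p^'n \<Rightarrow> real^'p^'n" where
  "Proj \<beta> X Z = (THE W. W \<in> tangent_space X \<and>
                     (\<forall>\<xi>\<in>tangent_space X. gbeta \<beta> X \<xi> (Z - W) = 0))"

definition grad_beta :: "real \<Rightarrow> (real^'p^'n \<Rightarrow> real) \<Rightarrow> real^'p^'n \<Rightarrow> real^'p^'n" where
  "grad_beta \<beta> f X = (THE G. G \<in> tangent_space X \<and>
       (\<forall>\<xi>\<in>tangent_space X. frechet_derivative f (at X) \<xi> = gbeta \<beta> X \<xi> G))"

definition skew :: "real^'n^'n \<Rightarrow> real^'n^'n" where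
  "skew A = (1/2) *\<^sub>R (A - transpose A)"

end

theory Submission
  imports Defs
begin

text \<open>
  With \<open>N = (X\<^sup>T X)\<^sup>-\<^sup>1\<close> and the orthogonal projector \<open>P = X N X\<^sup>T\<close> onto the column space
  of \<open>X\<close>, the \<open>\<beta>\<close>-metric reads \<open>g(\<xi>, \<zeta>) = \<langle>\<xi>, (I - (1 - \<beta>) P) \<zeta> N\<rangle>\<close>. It is positive
  definite for \<open>\<beta> > 0\<close>: since \<open>N = (X N)\<^sup>T (X N)\<close>, putting \<open>V = \<zeta> N X\<^sup>T\<close> gives
  \<open>g(\<zeta>, \<zeta>) = |V - P V|\<^sup>2 + \<beta> |P V|\<^sup>2\<close>, and \<open>V X = \<zeta>\<close>. So representers of \<open>Df(X)\<close> with respect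
  to \<open>g\<close> on a subspace are unique, and the representer on a subspace is the \<open>g\<close>-orthogonal
  projection of the one on the whole space. It remains to check explicit candidates:
  \<open>\<nabla>\<^sub>E f X\<^sup>T X + ((1 - \<beta>) / \<beta>) P \<nabla>\<^sub>E f X\<^sup>T X\<close> represents \<open>Df(X)\<close> everywhere, and the
  claimed gradient is tangent and represents \<open>Df(X)\<close> on tangent vectors, because there
  \<open>\<langle>\<xi>, P \<nabla>\<^sub>E f\<rangle> + \<langle>\<xi>, X \<nabla>\<^sub>E f\<^sup>T X N\<rangle> = \<langle>\<xi>\<^sup>T X + X\<^sup>T \<xi>, N X\<^sup>T \<nabla>\<^sub>E f\<rangle> = 0\<close>.
\<close>

lemma matrix_add_rdistrib: "((A::'a::semiring_1^'n^'m) + B) ** C = A ** C + B ** C"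
  by (simp add: matrix_matrix_mult_def vec_eq_iff sum.distrib distrib_right)

lemma matrix_diff_rdistrib: "((A::'a::ring_1^'n^'m) - B) ** C = A ** C - B ** C"
  by (simp add: matrix_matrix_mult_def vec_eq_iff sum_subtractf left_diff_distrib)

lemma matrix_diff_ldistrib: "(A::'a::ring_1^'n^'m) ** (B - C) = A ** B - A ** C"
  by (simp add: matrix_matrix_mult_def vec_eq_iff sum_subtractf right_diff_distrib)

lemma transpose_zero [simp]: "transpose 0 = (0::'a::zero^'n^'m)"
  by (simp add: transpose_def vec_eq_iff)

lemma transpose_add: "transpose (A + B) = transpose A + transpose (B::'a::plus^'n^'m)"
  by (simp add: transpose_def vec_eq_iff)

lemma transpose_diff: "transpose (A - B) = transpose A - transpose (B::'a::minus^'n^'m)"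
  by (simp add: transpose_def vec_eq_iff)

lemmas matrix_algebra = matrix_mul_assoc matrix_add_ldistrib matrix_add_rdistrib
  matrix_diff_ldistrib matrix_diff_rdistrib scalar_matrix_assoc[symmetric] matrix_scalar_ac
  matrix_transpose_mul transpose_add transpose_diff transpose_scalar

lemma trace_transpose_mult: "trace (transpose A ** B) = A \<bullet> (B::real^'p^'n)"
  unfolding trace_def matrix_matrix_mult_def transpose_def inner_vec_def
  by (simp, subst sum.swap, simp add: mult.commute)

lemma inner_matrix_mult_left: "(A ** B) \<bullet> C = B \<bullet> (transpose A ** (C::real^'p^'n))"
  by (simp flip: trace_transpose_mult add: matrix_transpose_mul matrix_mul_assoc)

lemma inner_transpose: "transpose A \<bullet> transpose B = A \<bullet> (B::real^'p^'n)"
proof -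
  have "transpose A \<bullet> transpose B = trace (A ** transpose B)"
    by (simp flip: trace_transpose_mult)
  also have "\<dots> = trace (transpose B ** A)"
    by (rule trace_mul_sym)
  finally show ?thesis
    by (simp add: trace_transpose_mult inner_commute)
qed

lemma inner_matrix_mult_right: "(A ** B) \<bullet> C = A \<bullet> (C ** transpose (B::real^'p^'k))"
proof -
  have "(A ** B) \<bullet> C = (transpose B ** transpose A) \<bullet> transpose C"
    by (metis inner_transpose matrix_transpose_mul)
  also have "\<dots> = transpose A \<bullet> (B ** transpose C)"
    by (simp add: inner_matrix_mult_left)
  also have "\<dots> = A \<bullet> (C ** transpose B)"
    by (metis inner_transpose matrix_transpose_mul transpose_transpose)
  finally show ?thesis .
qed

locale anisotropic_form =
  fixes g :: "'a::real_vector \<Rightarrow> 'a \<Rightarrow> real"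
  assumes linear_right: "linear (g x)"
    and anisotropic: "g x x = 0 \<Longrightarrow> x = 0"
begin

lemma representer_unique:
  assumes "subspace S" "G \<in> S" "G' \<in> S" "\<forall>\<xi>\<in>S. g \<xi> G = g \<xi> G'"
  shows "G = G'"
proof -
  have "G - G' \<in> S" using assms(1-3) by (rule subspace_diff)
  then have "g (G - G') (G - G') = 0"
    using assms(4) by (simp add: linear_diff[OF linear_right])
  then show ?thesis using anisotropic by fastforce
qed

lemma ex1_representer:
  assumes "subspace S" "G \<in> S" "\<forall>\<xi>\<in>S. L \<xi> = g \<xi> G"
  shows "\<exists>!G. G \<in> S \<and> (\<forall>\<xi>\<in>S. L \<xi> = g \<xi> G)"
  using assms representer_unique by (metis (no_types, lifting))

lemma the_representer:
  assumes "subspace S" "G \<in> S" "\<forall>\<xi>\<in>S. L \<xi> = g \<xi> G"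
  shows "(THE G. G \<in> S \<and> (\<forall>\<xi>\<in>S. L \<xi> = g \<xi> G)) = G"
  using ex1_representer[OF assms] assms(2,3) by (blast intro: the1_equality)

lemma the_global_representer:
  assumes "\<forall>\<xi>. L \<xi> = g \<xi> Z"
  shows "(THE Z. \<forall>\<xi>. L \<xi> = g \<xi> Z) = Z"
  using the_representer[OF subspace_UNIV, of Z L] assms by simp

lemma projection_of_representer:
  assumes "subspace S" "G \<in> S" "\<forall>\<xi>\<in>S. L \<xi> = g \<xi> G" "\<forall>\<xi>. L \<xi> = g \<xi> Z"
  shows "(THE W. W \<in> S \<and> (\<forall>\<xi>\<in>S. g \<xi> (Z - W) = 0)) = G"
proof -
  have "g \<xi> (Z - W) = 0 \<longleftrightarrow> L \<xi> = g \<xi> W" for \<xi> W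
    using assms(4) by (simp add: linear_diff[OF linear_right])
  then show ?thesis using the_representer[OF assms(1-3)] by simp
qed

end

lemma subspace_tangent_space: "subspace (tangent_space X)"
  unfolding subspace_def tangent_space_def
  by (simp add: matrix_algebra algebra_simps flip: scaleR_add_right)

lemma egrad_inner:
  assumes "f differentiable (at X)"
  shows "frechet_derivative f (at X) \<xi> = \<xi> \<bullet> egrad f X"
proof -
  obtain E where E: "\<forall>\<xi>. frechet_derivative f (at X) \<xi> = \<xi> \<bullet> E"
  proof
    have "linear (frechet_derivative f (at X))"
      using assms frechet_derivative_works has_derivative_linear by blast
    then show "\<forall>\<xi>. frechet_derivative f (at X) \<xi> = \<xi> \<bullet> adjoint (frechet_derivative f (at X)) 1"
      using adjoint_works by (metis inner_commute inner_real_def mult.right_neutral)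
  qed
  have "egrad f X = E"
    unfolding egrad_def trace_transpose_mult
  proof (rule the_equality)
    fix G assume "\<forall>\<xi>. frechet_derivative f (at X) \<xi> = \<xi> \<bullet> G"
    then have "(G - E) \<bullet> (G - E) = 0" using E by (simp add: inner_diff_right)
    then show "G = E" by simp
  qed (fact E)
  then show ?thesis using E by simp
qed

context
  fixes X :: "real^'p^'n"
  assumes full_rank: "full_rank X"
begin

lemma gram_invertible: "invertible (transpose X ** X)"
proof -
  have "X *v v = 0" if "(transpose X ** X) *v v = 0" for v
  proof -
    have "(X *v v) \<bullet> (X *v v) = v \<bullet> ((transpose X ** X) *v v)"
      by (metis dot_lmul_matrix vector_transpose_matrix matrix_vector_mul_assoc)
    then show ?thesis using that by simp
  qed
  moreover have "inj ((*v) X)"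
    using full_rank full_rank_injective unfolding full_rank_def by blast
  ultimately have "inj ((*v) (transpose X ** X))"
    by (metis matrix_left_invertible_injective matrix_left_invertible_ker inj_eq matrix_vector_mult_0_right)
  then show ?thesis
    using matrix_left_invertible_injective invertible_left_inverse by blast
qed

abbreviation gram_inv where "gram_inv \<equiv> matrix_inv (transpose X ** X)"

abbreviation col_proj where "col_proj \<equiv> X ** gram_inv ** transpose X"

lemma gram_inv_right: "transpose X ** X ** gram_inv = mat 1"
  and gram_inv_left: "gram_inv ** transpose X ** X = mat 1"
  using gram_invertible unfolding invertible_def matrix_inv_def
  by (metis (mono_tags, lifting) someI_ex matrix_mul_assoc)+

lemma mult_gram_inv_right: "Y ** transpose X ** X ** gram_inv = Y"
  and mult_gram_inv_left: "Y ** gram_inv ** transpose X ** X = Y"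
  by (metis gram_inv_right gram_inv_left matrix_mul_assoc matrix_mul_rid)+

lemma gram_inv_symmetric: "transpose gram_inv = gram_inv"
proof -
  have left_inv: "transpose gram_inv ** (transpose X ** X) = mat 1"
    using gram_inv_right by (metis matrix_transpose_mul transpose_mat transpose_transpose)
  have "transpose gram_inv = transpose gram_inv ** (transpose X ** X ** gram_inv)"
    by (simp add: gram_inv_right)
  also have "\<dots> = gram_inv"
    by (metis left_inv matrix_mul_assoc matrix_mul_lid)
  finally show ?thesis .
qed

lemmas gram_inv_simps = gram_inv_right gram_inv_left mult_gram_inv_right mult_gram_inv_left
  gram_inv_symmetric

lemma col_proj_symmetric: "transpose col_proj = col_proj"
  by (simp add: matrix_algebra gram_inv_simps)

lemma gbeta_eq_inner: "gbeta \<beta> X \<xi> \<zeta> = \<xi> \<bullet> ((mat 1 - (1 - \<beta>) *\<^sub>R col_proj) ** \<zeta> ** gram_inv)"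
  unfolding gbeta_def by (simp flip: trace_transpose_mult add: matrix_mul_assoc)

lemma gbeta_self:
  fixes D :: "real^'p^'n"
  defines "V \<equiv> D ** gram_inv ** transpose X"
  shows "gbeta \<beta> X D D = (V - col_proj ** V) \<bullet> (V - col_proj ** V) + \<beta> * ((col_proj ** V) \<bullet> (col_proj ** V))"
proof -
  let ?A = "mat 1 - (1 - \<beta>) *\<^sub>R col_proj"
  have "gbeta \<beta> X D D = D \<bullet> ((?A ** V) ** (X ** gram_inv))"
    unfolding gbeta_eq_inner V_def by (simp add: matrix_mul_assoc mult_gram_inv_left)
  also have "\<dots> = (?A ** V) \<bullet> V"
    by (simp add: inner_commute inner_matrix_mult_right V_def matrix_algebra gram_inv_symmetric)
  also have "\<dots> = V \<bullet> V - (1 - \<beta>) * ((col_proj ** V) \<bullet> V)"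
    by (simp add: matrix_diff_rdistrib inner_diff_left flip: scalar_matrix_assoc)
  moreover have "(col_proj ** V) \<bullet> (col_proj ** V) = (col_proj ** V) \<bullet> V"
    by (simp add: inner_matrix_mult_left col_proj_symmetric inner_commute matrix_mul_assoc
        gram_inv_simps)
  ultimately show ?thesis
    by (simp add: inner_diff_left inner_diff_right inner_commute algebra_simps)
qed

lemma anisotropic_form_gbeta:
  assumes "\<beta> > 0"
  shows "anisotropic_form (gbeta \<beta> X)"
proof (rule anisotropic_form.intro)
  show "linear (gbeta \<beta> X \<xi>)" for \<xi>
    by (rule linearI) (simp_all add: gbeta_eq_inner matrix_algebra inner_add_right)
next
  fix D :: "real^'p^'n"
  assume "gbeta \<beta> X D D = 0"
  define V where "V = D ** gram_inv ** transpose X"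
  have "(V - col_proj ** V) \<bullet> (V - col_proj ** V) + \<beta> * ((col_proj ** V) \<bullet> (col_proj ** V)) = 0"
    using \<open>gbeta \<beta> X D D = 0\<close> unfolding gbeta_self V_def .
  moreover have "0 \<le> (V - col_proj ** V) \<bullet> (V - col_proj ** V)" "0 \<le> \<beta> * ((col_proj ** V) \<bullet> (col_proj ** V))"
    using assms by simp_all
  ultimately have "(V - col_proj ** V) \<bullet> (V - col_proj ** V) = 0" "\<beta> * ((col_proj ** V) \<bullet> (col_proj ** V)) = 0"
    by linarith+
  then have "V = 0"
    using assms by simp
  then have "V ** X = 0" by simp
  then show "D = 0" by (simp add: V_def mult_gram_inv_left)
qed

lemma inner_eq_gbeta:
  assumes "\<beta> \<noteq> 0"
  shows "\<xi> \<bullet> E = gbeta \<beta> X \<xi> (E ** (transpose X ** X) + ((1 - \<beta>) / \<beta>) *\<^sub>R (col_proj ** E ** (transpose X ** X)))"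
proof -
  define q where "q = (1 - \<beta>) / \<beta>"
  have "(mat 1 - (1 - \<beta>) *\<^sub>R col_proj) ** (E ** (transpose X ** X) + q *\<^sub>R (col_proj ** E ** (transpose X ** X))) ** gram_inv
      = E + (q - (1 - \<beta>) - (1 - \<beta>) * q) *\<^sub>R (col_proj ** E)"
    by (simp add: matrix_algebra gram_inv_simps algebra_simps)
  moreover have "q - (1 - \<beta>) - (1 - \<beta>) * q = 0"
    using assms by (simp add: q_def field_simps)
  ultimately show ?thesis
    by (simp add: gbeta_eq_inner q_def)
qed

lemma grad_formula_in_tangent_space:
  "E ** (transpose X ** X) - c *\<^sub>R (X ** transpose E ** X) + (c - 1) *\<^sub>R (col_proj ** E ** (transpose X ** X))
     \<in> tangent_space X"
  unfolding tangent_space_def by (simp add: matrix_algebra gram_inv_simps algebra_simps)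

lemma tangent_inner_col_proj_cancel:
  assumes "\<xi> \<in> tangent_space X"
  shows "\<xi> \<bullet> (col_proj ** E) + \<xi> \<bullet> (X ** transpose E ** X ** gram_inv) = 0"
proof -
  let ?W = "gram_inv ** transpose X ** E"
  have "\<xi> \<bullet> (col_proj ** E) = ?W \<bullet> (transpose X ** \<xi>)"
    using inner_matrix_mult_left[of X ?W \<xi>] by (simp add: inner_commute matrix_mul_assoc)
  moreover have "\<xi> \<bullet> (X ** transpose E ** X ** gram_inv) = transpose \<xi> \<bullet> (?W ** transpose X)"
    using inner_transpose[of \<xi> "X ** transpose E ** X ** gram_inv"]
    by (simp add: matrix_transpose_mul gram_inv_symmetric matrix_mul_assoc)
  moreover have "transpose \<xi> \<bullet> (?W ** transpose X) = ?W \<bullet> (transpose \<xi> ** X)"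
    using inner_matrix_mult_right[of "transpose \<xi>" X ?W] by (simp add: inner_commute)
  ultimately show ?thesis
    using assms unfolding tangent_space_def by (simp flip: inner_add_right add: add.commute)
qed

lemma inner_eq_gbeta_tangent:
  assumes "\<beta> \<noteq> 0" and "\<xi> \<in> tangent_space X"
  shows "\<xi> \<bullet> E = gbeta \<beta> X \<xi> (E ** (transpose X ** X) - (1 / (2 * \<beta>)) *\<^sub>R (X ** transpose E ** X)
                                 + (1 / (2 * \<beta>) - 1) *\<^sub>R (col_proj ** E ** (transpose X ** X)))"
proof -
  define c where "c = 1 / (2 * \<beta>)"
  have "(mat 1 - (1 - \<beta>) *\<^sub>R col_proj) ** (E ** (transpose X ** X) - c *\<^sub>R (X ** transpose E ** X)
          + (c - 1) *\<^sub>R (col_proj ** E ** (transpose X ** X))) ** gram_inv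
      = E + ((c - 1) - (1 - \<beta>) - (1 - \<beta>) * (c - 1)) *\<^sub>R (col_proj ** E)
          + ((1 - \<beta>) * c - c) *\<^sub>R (X ** transpose E ** X ** gram_inv)"
    by (simp add: matrix_algebra gram_inv_simps algebra_simps)
  moreover have "(c - 1) - (1 - \<beta>) - (1 - \<beta>) * (c - 1) = - 1 / 2" "(1 - \<beta>) * c - c = - 1 / 2"
    using assms(1) by (simp_all add: c_def field_simps)
  ultimately show ?thesis
    using tangent_inner_col_proj_cancel[OF assms(2), of E]
    by (simp add: gbeta_eq_inner c_def inner_add_right inner_diff_right)
qed

lemma
  assumes "\<beta> > 0" and "f differentiable (at X)"
  shows ex1_grad_beta:
      "\<exists>!G. G \<in> tangent_space X \<and> (\<forall>\<xi>\<in>tangent_space X. frechet_derivative f (at X) \<xi> = gbeta \<beta> X \<xi> G)"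
    and grad_beta_eq:
      "grad_beta \<beta> f X = egrad f X ** (transpose X ** X) - (1 / (2 * \<beta>)) *\<^sub>R (X ** transpose (egrad f X) ** X)
                          + (1 / (2 * \<beta>) - 1) *\<^sub>R (col_proj ** egrad f X ** (transpose X ** X))"
    and nabla_beta_eq:
      "nabla_beta \<beta> f X = egrad f X ** (transpose X ** X) + ((1 - \<beta>) / \<beta>) *\<^sub>R (col_proj ** egrad f X ** (transpose X ** X))"
    and grad_beta_eq_Proj_nabla_beta: "grad_beta \<beta> f X = Proj \<beta> X (nabla_beta \<beta> f X)"
proof -
  interpret anisotropic_form "gbeta \<beta> X"
    using anisotropic_form_gbeta assms(1) .
  let ?L = "frechet_derivative f (at X)"
  let ?G = "egrad f X ** (transpose X ** X) - (1 / (2 * \<beta>)) *\<^sub>R (X ** transpose (egrad f X) ** X)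
            + (1 / (2 * \<beta>) - 1) *\<^sub>R (col_proj ** egrad f X ** (transpose X ** X))"
  let ?Z = "egrad f X ** (transpose X ** X) + ((1 - \<beta>) / \<beta>) *\<^sub>R (col_proj ** egrad f X ** (transpose X ** X))"
  have G_tangent: "?G \<in> tangent_space X"
    by (rule grad_formula_in_tangent_space)
  have "\<beta> \<noteq> 0"
    using assms(1) by simp
  have G_represents: "\<forall>\<xi>\<in>tangent_space X. ?L \<xi> = gbeta \<beta> X \<xi> ?G"
    using egrad_inner[OF assms(2)] inner_eq_gbeta_tangent[OF \<open>\<beta> \<noteq> 0\<close>] by simp
  have Z_represents: "\<forall>\<xi>. ?L \<xi> = gbeta \<beta> X \<xi> ?Z"
    using egrad_inner[OF assms(2)] inner_eq_gbeta[OF \<open>\<beta> \<noteq> 0\<close>] by simp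
  show "\<exists>!G. G \<in> tangent_space X \<and> (\<forall>\<xi>\<in>tangent_space X. ?L \<xi> = gbeta \<beta> X \<xi> G)"
    using subspace_tangent_space G_tangent G_represents by (rule ex1_representer)
  show grad: "grad_beta \<beta> f X = ?G"
    unfolding grad_beta_def using subspace_tangent_space G_tangent G_represents by (rule the_representer)
  show nabla: "nabla_beta \<beta> f X = ?Z"
    unfolding nabla_beta_def using Z_represents by (rule the_global_representer)
  show "grad_beta \<beta> f X = Proj \<beta> X (nabla_beta \<beta> f X)"
    unfolding Proj_def grad nabla
    using subspace_tangent_space G_tangent G_represents Z_represents
    by (rule projection_of_representer[symmetric])
qed

end

theorem proposition6:
  fixes f :: "real^'p^'n \<Rightarrow> real" and X :: "real^'p^'n" and \<beta> :: real
  assumes "CARD('p) \<le> CARD('n)"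
    and "\<beta> > 0"
    and "smooth f"
    and "full_rank X"
  shows "(\<exists>!G. G \<in> tangent_space X \<and>
            (\<forall>\<xi>\<in>tangent_space X. frechet_derivative f (at X) \<xi> = gbeta \<beta> X \<xi> G))
    \<and> grad_beta \<beta> f X = Proj \<beta> X (nabla_beta \<beta> f X)
    \<and> grad_beta \<beta> f X =
        egrad f X ** (transpose X ** X)
        - (1 / (2 * \<beta>)) *\<^sub>R (X ** transpose (egrad f X) ** X)
        + (1 / (2 * \<beta>) - 1) *\<^sub>R
            (X ** matrix_inv (transpose X ** X) ** transpose X ** egrad f X ** (transpose X ** X))
    \<and> grad_beta (1/2) f X = egrad f X ** (transpose X ** X) - X ** transpose (egrad f X) ** X
    \<and> grad_beta (1/2) f X = 2 *\<^sub>R (skew (egrad f X ** transpose X) ** X)"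
proof -
  \<comment> \<open>\<open>CARD('p) \<le> CARD('n)\<close> is implied by \<open>full_rank X\<close> and not needed.\<close>
  have diff: "f differentiable (at X)"
    using \<open>smooth f\<close> unfolding smooth_def by (metis Ck.simps(2))
  have half: "grad_beta (1/2) f X = egrad f X ** (transpose X ** X) - X ** transpose (egrad f X) ** X"
    using grad_beta_eq[OF \<open>full_rank X\<close> _ diff, of "1/2"] by simp
  then have "grad_beta (1/2) f X = 2 *\<^sub>R (skew (egrad f X ** transpose X) ** X)"
    by (simp add: skew_def matrix_algebra)
  then show ?thesis
    using half ex1_grad_beta grad_beta_eq_Proj_nabla_beta grad_beta_eq assms(2,4) diff by blast
qed

end
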